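(* Let $(X,d)$ be a bicomplete quasi-pseudometric space. Let $J:X\to X$ be a continuous single-valued map such that $r\,d(x,y)\le d(Jx,Jy)$ for all $x,y\in X$, for some constant $r>0$. Let $F:X\to CB(X)$ be a set-valued map such that $$H(Fx,Fy)\le \alpha\big[d(Jx,Fx)+d(Jy,Fy)\big]\quad\text{for all }x,y\in X,$$ where $\alpha\in(0,1/2)$. Then there exists a unique $x_0\in X$ which is both a startpoint and an endpoint of $J$ and $F$ if and only if $J$ and $F$ have the approximate mix-point property.
   Context: A quasi-pseudometric on a nonempty set $X$ is a map $d:X\times X\to[0,\infty)$ with $d(x,x)=0$ and $d(x,z)\le d(x,y)+d(y,z)$ for all $x,y,z$; it is $T_0$ if $d(x,y)=0=d(y,x)$ implies $x=y$. Write $d^s(x,y)=\max\{d(x,y),d(y,x)\}$. The space $(X,d)$ is bicomplete if $d$ is $T_0$ and the metric $d^s$ is complete. For $x\in X$ and nonempty $A\subseteq X$: $d(x,A)=\inf_{a\in A}d(x,a)$, $d(A,x)=\inf_{a\in A}d(a,x)$. For nonempty $A,B\subseteq X$: $H(A,B)=\max\{\sup_{a\in A}d(a,B),\ \sup_{b\in B}d(A,b)\}$. $CB(X)$ denotes the family of nonempty $d^s$-bounded, $\tau(d^s)$-closed subsets of $X$; continuity of $J$ is with respect to $\tau(d^s)$. For $J:X\to X$ and $F:X\to 2^X$, a point $x$ is a startpoint of $J$ and $F$ if $H(\{Jx\},Fx)=0$ and an endpoint of $J$ and $F$ if $H(Fx,\{Jx\})=0$. $J$ and $F$ have the approximate mix-point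 property if $\inf_{x\in X}\sup_{y\in Fx}d^s(Jx,y)=0$. *)

theory Defs
  imports "HOL-Analysis.Analysis"
begin

definition quasi_pseudometric :: "('a \<Rightarrow> 'a \<Rightarrow> real) \<Rightarrow> bool" where
  "quasi_pseudometric d \<longleftrightarrow>
     (\<forall>x y. d x y \<ge> 0) \<and> (\<forall>x. d x x = 0) \<and> (\<forall>x y z. d x z \<le> d x y + d y z)"

definition qpm_T0 :: "('a \<Rightarrow> 'a \<Rightarrow> real) \<Rightarrow> bool" where
  "qpm_T0 d \<longleftrightarrow> (\<forall>x y. d x y = 0 \<and> d y x = 0 \<longrightarrow> x = y)"

definition dsym :: "('a \<Rightarrow> 'a \<Rightarrow> real) \<Rightarrow> 'a \<Rightarrow> 'a \<Rightarrow> real" where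
  "dsym d x y = max (d x y) (d y x)"

definition ds_Cauchy :: "('a \<Rightarrow> 'a \<Rightarrow> real) \<Rightarrow> (nat \<Rightarrow> 'a) \<Rightarrow> bool" where
  "ds_Cauchy d s \<longleftrightarrow> (\<forall>e>0. \<exists>N. \<forall>m\<ge>N. \<forall>n\<ge>N. dsym d (s m) (s n) < e)"

definition ds_converges :: "('a \<Rightarrow> 'a \<Rightarrow> real) \<Rightarrow> (nat \<Rightarrow> 'a) \<Rightarrow> 'a \<Rightarrow> bool" where
  "ds_converges d s x \<longleftrightarrow> (\<lambda>n. dsym d (s n) x) \<longlonglongrightarrow> 0"

definition bicomplete :: "('a \<Rightarrow> 'a \<Rightarrow> real) \<Rightarrow> bool" where
  "bicomplete d \<longleftrightarrow> qpm_T0 d \<and> (\<forall>s. ds_Cauchy d s \<longrightarrow> (\<exists>x. ds_converges d s x))"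

definition ds_open :: "('a \<Rightarrow> 'a \<Rightarrow> real) \<Rightarrow> 'a set \<Rightarrow> bool" where
  "ds_open d U \<longleftrightarrow> (\<forall>x\<in>U. \<exists>e>0. {y. dsym d x y < e} \<subseteq> U)"

definition ds_closed :: "('a \<Rightarrow> 'a \<Rightarrow> real) \<Rightarrow> 'a set \<Rightarrow> bool" where
  "ds_closed d A \<longleftrightarrow> ds_open d (- A)"

definition ds_bounded :: "('a \<Rightarrow> 'a \<Rightarrow> real) \<Rightarrow> 'a set \<Rightarrow> bool" where
  "ds_bounded d A \<longleftrightarrow> (\<exists>M. \<forall>a\<in>A. \<forall>b\<in>A. dsym d a b \<le> M)"

definition CB :: "('a \<Rightarrow> 'a \<Rightarrow> real) \<Rightarrow> 'a set set" where
  "CB d = {A. A \<noteq> {} \<and> ds_bounded d A \<and> ds_closed d A}"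

definition ds_continuous :: "('a \<Rightarrow> 'a \<Rightarrow> real) \<Rightarrow> ('a \<Rightarrow> 'a) \<Rightarrow> bool" where
  "ds_continuous d J \<longleftrightarrow>
     (\<forall>x. \<forall>e>0. \<exists>\<delta>>0. \<forall>y. dsym d x y < \<delta> \<longrightarrow> dsym d (J x) (J y) < e)"

definition dpt_set :: "('a \<Rightarrow> 'a \<Rightarrow> real) \<Rightarrow> 'a \<Rightarrow> 'a set \<Rightarrow> real" where
  "dpt_set d x A = (INF a\<in>A. d x a)"

definition dset_pt :: "('a \<Rightarrow> 'a \<Rightarrow> real) \<Rightarrow> 'a set \<Rightarrow> 'a \<Rightarrow> real" where
  "dset_pt d A x = (INF a\<in>A. d a x)"

definition Haus :: "('a \<Rightarrow> 'a \<Rightarrow> real) \<Rightarrow> 'a set \<Rightarrow> 'a set \<Rightarrow> real" where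
  "Haus d A B = max (SUP a\<in>A. dpt_set d a B) (SUP b\<in>B. dset_pt d A b)"

definition startpoint :: "('a \<Rightarrow> 'a \<Rightarrow> real) \<Rightarrow> ('a \<Rightarrow> 'a) \<Rightarrow> ('a \<Rightarrow> 'a set) \<Rightarrow> 'a \<Rightarrow> bool" where
  "startpoint d J F x \<longleftrightarrow> Haus d {J x} (F x) = 0"

definition endpoint :: "('a \<Rightarrow> 'a \<Rightarrow> real) \<Rightarrow> ('a \<Rightarrow> 'a) \<Rightarrow> ('a \<Rightarrow> 'a set) \<Rightarrow> 'a \<Rightarrow> bool" where
  "endpoint d J F x \<longleftrightarrow> Haus d (F x) {J x} = 0"

definition approx_mix_point_property :: "('a \<Rightarrow> 'a \<Rightarrow> real) \<Rightarrow> ('a \<Rightarrow> 'a) \<Rightarrow> ('a \<Rightarrow> 'a set) \<Rightarrow> bool" where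
  "approx_mix_point_property d J F \<longleftrightarrow> (INF x. SUP y\<in>F x. dsym d (J x) y) = 0"

end

theory Submission
  imports Defs
begin

text \<open>
  A point x with F x = {J x} is exactly a point that is both a startpoint and an endpoint, and the
  Kannan-type condition makes such a point unique: for two of them H(Fx,Fy) = d(Jx,Jy) is bounded
  by 0, and J is expanding. Such a point has zero defect sup {d^s(Jx,y) | y \<in> Fx}, which gives
  the approximate mix-point property. Conversely, along a sequence whose defects tend to 0 the
  Kannan condition bounds d(Jx_m,Jx_n) by (1 + \<alpha>) times the sum of the defects, so the
  sequence is d^s-Cauchy because J is expanding. At its limit z, continuity of J and the Kannan
  condition give first (1 - \<alpha>) d(Jz,y) \<le> 0 and then d(y,Jz) \<le> 0 for every y \<in> Fz,
  so Fz = {Jz}.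
\<close>

lemma d_le_dsym: "d x y \<le> dsym d x y"
  by (simp add: dsym_def)

lemma d_le_dsym_commute: "d y x \<le> dsym d x y"
  by (simp add: dsym_def)

lemma dsym_commute: "dsym d x y = dsym d y x"
  by (simp add: dsym_def max.commute)

lemma dpt_set_singleton [simp]: "dpt_set d a {b} = d a b"
  by (simp add: dpt_set_def)

lemma dset_pt_singleton [simp]: "dset_pt d {a} b = d a b"
  by (simp add: dset_pt_def)

lemma Haus_singletons [simp]: "Haus d {a} {b} = d a b"
  by (simp add: Haus_def)

lemma dpt_set_greatest: "B \<noteq> {} \<Longrightarrow> (\<And>b. b \<in> B \<Longrightarrow> c \<le> d a b) \<Longrightarrow> c \<le> dpt_set d a B"
  unfolding dpt_set_def by (rule cINF_greatest)

lemma dset_pt_greatest: "A \<noteq> {} \<Longrightarrow> (\<And>a. a \<in> A \<Longrightarrow> c \<le> d a b) \<Longrightarrow> c \<le> dset_pt d A b"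
  unfolding dset_pt_def by (rule cINF_greatest)

lemma ds_CauchyI_null:
  assumes bound: "\<And>m n. dsym d (x m) (x n) \<le> s m + s n" and null: "s \<longlonglongrightarrow> 0"
  shows "ds_Cauchy d x"
  unfolding ds_Cauchy_def
proof (intro allI impI)
  fix e :: real
  assume "e > 0"
  then obtain N where N: "\<And>n. n \<ge> N \<Longrightarrow> \<bar>s n\<bar> < e / 2"
    using null unfolding LIMSEQ_iff by (metis half_gt_zero real_norm_def diff_zero)
  have "dsym d (x m) (x n) < e" if "m \<ge> N" "n \<ge> N" for m n
    using bound[of m n] N[OF that(1)] N[OF that(2)] by linarith
  then show "\<exists>N. \<forall>m\<ge>N. \<forall>n\<ge>N. dsym d (x m) (x n) < e"
    by blast
qed

lemma exists_seq_tendsto_INF: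
  fixes f :: "'b \<Rightarrow> real"
  assumes "bdd_below (range f)"
  obtains xs where "(\<lambda>n. f (xs n)) \<longlonglongrightarrow> (INF x. f x)"
proof -
  have "(INF x. f x) \<in> closure (range f)"
    using assms by (intro closure_contains_Inf) auto
  then obtain u where u: "\<And>n. u n \<in> range f" "u \<longlonglongrightarrow> (INF x. f x)"
    unfolding closure_sequential by blast
  moreover have "(\<lambda>n. f (inv f (u n))) = u"
    using u(1) by (simp add: fun_eq_iff f_inv_into_f)
  ultimately show thesis
    using that by metis
qed

locale quasi_pseudometric_space =
  fixes d :: "'a \<Rightarrow> 'a \<Rightarrow> real"
  assumes quasi_pseudometric: "quasi_pseudometric d"
begin

lemma d_nonneg [simp]: "0 \<le> d x y"
  using quasi_pseudometric unfolding quasi_pseudometric_def by blast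

lemma d_refl [simp]: "d x x = 0"
  using quasi_pseudometric unfolding quasi_pseudometric_def by blast

lemma d_triangle: "d x z \<le> d x y + d y z"
  using quasi_pseudometric unfolding quasi_pseudometric_def by blast

lemma dsym_nonneg [simp]: "0 \<le> dsym d x y"
  using d_le_dsym d_nonneg order_trans by metis

lemma dsym_refl [simp]: "dsym d x x = 0"
  by (simp add: dsym_def)

lemma dsym_triangle: "dsym d x z \<le> dsym d x y + dsym d y z"
proof -
  have "d x z \<le> d x y + d y z" "d z x \<le> d z y + d y x"
    by (rule d_triangle)+
  then show ?thesis
    unfolding dsym_def by linarith
qed

lemma dsym_le_SUP:
  assumes "ds_bounded d A" "y \<in> A"
  shows "dsym d p y \<le> (SUP y\<in>A. dsym d p y)"
proof (rule cSUP_upper[OF \<open>y \<in> A\<close>])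
  obtain M where M: "\<forall>a\<in>A. \<forall>b\<in>A. dsym d a b \<le> M"
    using assms(1) unfolding ds_bounded_def by blast
  have "dsym d p x \<le> dsym d p y + M" if "x \<in> A" for x
    using dsym_triangle[where x=p and y=y and z=x] M \<open>y \<in> A\<close> that by fastforce
  then show "bdd_above ((\<lambda>y. dsym d p y) ` A)"
    by (rule bdd_aboveI2)
qed

lemma ds_continuous_converges:
  assumes "ds_continuous d J" and "ds_converges d x z"
  shows "ds_converges d (\<lambda>n. J (x n)) (J z)"
  unfolding ds_converges_def LIMSEQ_iff
proof (intro allI impI)
  fix e :: real
  assume "e > 0"
  then obtain \<delta> where "\<delta> > 0" and \<delta>: "\<And>y. dsym d z y < \<delta> \<Longrightarrow> dsym d (J z) (J y) < e"
    using assms(1) unfolding ds_continuous_def by blast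
  then obtain N where "\<And>n. n \<ge> N \<Longrightarrow> dsym d (x n) z < \<delta>"
    using assms(2) unfolding ds_converges_def LIMSEQ_iff by force
  then show "\<exists>N. \<forall>n\<ge>N. norm (dsym d (J (x n)) (J z) - 0) < e"
    using \<delta> by (metis dsym_commute dsym_nonneg diff_zero real_norm_def abs_of_nonneg)
qed

lemma dpt_set_le: "b \<in> B \<Longrightarrow> dpt_set d a B \<le> d a b"
  unfolding dpt_set_def by (rule cINF_lower) (auto intro!: bdd_belowI2 d_nonneg)

lemma dset_pt_le: "a \<in> A \<Longrightarrow> dset_pt d A b \<le> d a b"
  unfolding dset_pt_def by (rule cINF_lower) (auto intro!: bdd_belowI2 d_nonneg)

lemma dpt_set_le_Haus:
  assumes "ds_bounded d A" "B \<noteq> {}" "a \<in> A"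
  shows "dpt_set d a B \<le> Haus d A B"
proof -
  obtain b where b: "b \<in> B" using assms(2) by blast
  obtain M where M: "\<forall>x\<in>A. \<forall>y\<in>A. dsym d x y \<le> M"
    using assms(1) unfolding ds_bounded_def by blast
  have "dpt_set d x B \<le> M + d a b" if "x \<in> A" for x
    using dpt_set_le[OF b, of x] d_triangle[where x=x and y=a and z=b] M d_le_dsym[of d x a]
      that assms(3)
    by force
  then have "dpt_set d a B \<le> (SUP a\<in>A. dpt_set d a B)"
    using assms(3) by (intro cSUP_upper bdd_aboveI2)
  then show ?thesis
    unfolding Haus_def by linarith
qed

lemma dset_pt_le_Haus:
  assumes "ds_bounded d B" "A \<noteq> {}" "b \<in> B"
  shows "dset_pt d A b \<le> Haus d A B"
proof -
  obtain a where a: "a \<in> A" using assms(2) by blast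
  obtain M where M: "\<forall>x\<in>B. \<forall>y\<in>B. dsym d x y \<le> M"
    using assms(1) unfolding ds_bounded_def by blast
  have "dset_pt d A x \<le> d a b + M" if "x \<in> B" for x
    using dset_pt_le[OF a, of x] d_triangle[where x=a and y=b and z=x] M d_le_dsym[of d b x]
      that assms(3)
    by force
  then have "dset_pt d A b \<le> (SUP b\<in>B. dset_pt d A b)"
    using assms(3) by (intro cSUP_upper bdd_aboveI2)
  then show ?thesis
    unfolding Haus_def by linarith
qed

lemma d_le_Haus_right:
  assumes "ds_bounded d B" "A \<noteq> {}" "\<And>a. a \<in> A \<Longrightarrow> d p a \<le> s" "b \<in> B"
  shows "d p b \<le> s + Haus d A B"
proof -
  have "d p b - s \<le> dset_pt d A b"
  proof (rule dset_pt_greatest[OF assms(2)])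
    fix a assume "a \<in> A"
    then show "d p b - s \<le> d a b"
      using assms(3) d_triangle[where x=p and y=a and z=b] by fastforce
  qed
  then show ?thesis
    using dset_pt_le_Haus[OF assms(1,2,4)] by linarith
qed

lemma d_le_Haus_left:
  assumes "ds_bounded d A" "B \<noteq> {}" "\<And>b. b \<in> B \<Longrightarrow> d b p \<le> s" "a \<in> A"
  shows "d a p \<le> s + Haus d A B"
proof -
  have "d a p - s \<le> dpt_set d a B"
  proof (rule dpt_set_greatest[OF assms(2)])
    fix b assume "b \<in> B"
    then show "d a p - s \<le> d a b"
      using assms(3) d_triangle[where x=a and y=b and z=p] by fastforce
  qed
  then show ?thesis
    using dpt_set_le_Haus[OF assms(1,2,4)] by linarith
qed

end

locale bicomplete_space = quasi_pseudometric_space +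
  assumes bicomplete: "bicomplete d"
begin

lemma d_le_0_antisym: "d x y \<le> 0 \<Longrightarrow> d y x \<le> 0 \<Longrightarrow> x = y"
  using bicomplete d_nonneg unfolding bicomplete_def qpm_T0_def by (meson order_antisym)

lemma ds_Cauchy_converges: "ds_Cauchy d x \<Longrightarrow> \<exists>z. ds_converges d x z"
  using bicomplete unfolding bicomplete_def by blast

lemma Haus_singleton_eq_0_iff:
  assumes "B \<noteq> {}" "ds_bounded d B"
  shows "Haus d {p} B = 0 \<and> Haus d B {p} = 0 \<longleftrightarrow> B = {p}"
proof
  assume H0: "Haus d {p} B = 0 \<and> Haus d B {p} = 0"
  have "b = p" if "b \<in> B" for b
  proof (rule d_le_0_antisym)
    show "d b p \<le> 0"
      using dpt_set_le_Haus[OF assms(2) _ that, of "{p}"] H0 by simp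
    show "d p b \<le> 0"
      using dset_pt_le_Haus[OF assms(2) _ that, of "{p}"] H0 by simp
  qed
  then show "B = {p}"
    using assms(1) by blast
qed simp

end

definition mix_defect :: "('a \<Rightarrow> 'a \<Rightarrow> real) \<Rightarrow> ('a \<Rightarrow> 'a) \<Rightarrow> ('a \<Rightarrow> 'a set) \<Rightarrow> 'a \<Rightarrow> real" where
  "mix_defect d J F x = (SUP y\<in>F x. dsym d (J x) y)"

lemma approx_mix_point_property_iff_INF_mix_defect:
  "approx_mix_point_property d J F \<longleftrightarrow> (INF x. mix_defect d J F x) = 0"
  by (simp add: approx_mix_point_property_def mix_defect_def)

text \<open>Closedness of the values of F is never used, and \<alpha> < 1 suffices in place of \<alpha> < 1/2.\<close>

locale kannan_pair = bicomplete_space d for d :: "'a \<Rightarrow> 'a \<Rightarrow> real" +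
  fixes J :: "'a \<Rightarrow> 'a" and F :: "'a \<Rightarrow> 'a set" and r \<alpha> :: real
  assumes J_continuous: "ds_continuous d J"
    and r_pos: "0 < r" and J_expanding: "\<And>x y. r * d x y \<le> d (J x) (J y)"
    and F_nonempty: "\<And>x. F x \<noteq> {}" and F_bounded: "\<And>x. ds_bounded d (F x)"
    and \<alpha>_nonneg: "0 \<le> \<alpha>" and \<alpha>_less_1: "\<alpha> < 1"
    and Kannan: "\<And>x y. Haus d (F x) (F y) \<le> \<alpha> * (dpt_set d (J x) (F x) + dpt_set d (J y) (F y))"
begin

abbreviation defect :: "'a \<Rightarrow> real" where
  "defect \<equiv> mix_defect d J F"

lemma dsym_le_defect: "y \<in> F x \<Longrightarrow> dsym d (J x) y \<le> defect x"
  unfolding mix_defect_def by (rule dsym_le_SUP[OF F_bounded])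

lemma d_J_F_le_defect: "y \<in> F x \<Longrightarrow> d (J x) y \<le> defect x"
  using dsym_le_defect d_le_dsym order_trans by metis

lemma d_F_J_le_defect: "y \<in> F x \<Longrightarrow> d y (J x) \<le> defect x"
  using dsym_le_defect d_le_dsym_commute order_trans by metis

lemma defect_nonneg: "0 \<le> defect x"
  using F_nonempty dsym_le_defect dsym_nonneg order_trans by (metis ex_in_conv)

lemma dpt_set_le_defect: "dpt_set d (J x) (F x) \<le> defect x"
  using F_nonempty dpt_set_le d_J_F_le_defect order_trans by (metis ex_in_conv)

lemma defect_eq_0: "F x = {J x} \<Longrightarrow> defect x = 0"
  by (simp add: mix_defect_def)

lemma Haus_le_defect_left: "Haus d (F x) (F y) \<le> \<alpha> * (defect x + dpt_set d (J y) (F y))"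
  using Kannan mult_left_mono[OF add_right_mono[OF dpt_set_le_defect] \<alpha>_nonneg]
  by (rule order_trans)

lemma Haus_le_defect_right: "Haus d (F x) (F y) \<le> \<alpha> * (dpt_set d (J x) (F x) + defect y)"
  using Kannan mult_left_mono[OF add_left_mono[OF dpt_set_le_defect] \<alpha>_nonneg]
  by (rule order_trans)

lemma F_eq_singleton_J_unique:
  assumes "F x = {J x}" "F y = {J y}"
  shows "x = y"
proof -
  have "d (J x) (J y) \<le> 0" "d (J y) (J x) \<le> 0"
    using Kannan[of x y] Kannan[of y x] assms by simp_all
  then have "r * d x y \<le> 0" "r * d y x \<le> 0"
    using J_expanding order_trans by metis+
  then show "x = y"
    using r_pos d_le_0_antisym by (simp add: mult_le_0_iff)
qed

lemma d_J_le_defects: "d (J x) (J y) \<le> (1 + \<alpha>) * (defect x + defect y)"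
proof -
  obtain a where a: "a \<in> F x"
    using F_nonempty by blast
  have "d (J x) (J y) \<le> d (J x) a + d a (J y)"
    by (rule d_triangle)
  also have "\<dots> \<le> defect x + (defect y + Haus d (F x) (F y))"
    using d_J_F_le_defect[OF a] d_le_Haus_left[OF F_bounded F_nonempty d_F_J_le_defect a]
    by (rule add_mono)
  also have "\<dots> \<le> defect x + defect y + \<alpha> * (defect x + defect y)"
    using Haus_le_defect_left[of x y]
      mult_left_mono[OF add_left_mono[OF dpt_set_le_defect[of y], of "defect x"] \<alpha>_nonneg]
    by linarith
  finally show ?thesis
    by (simp only: distrib_right mult_1_left)
qed

lemma dsym_le_defects: "dsym d x y \<le> (1 + \<alpha>) * (defect x + defect y) / r"
proof -
  have "r * d x y \<le> (1 + \<alpha>) * (defect x + defect y)"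
    using J_expanding d_J_le_defects by (rule order_trans)
  moreover have "d (J y) (J x) \<le> (1 + \<alpha>) * (defect x + defect y)"
    using d_J_le_defects[of y x] by (simp add: add.commute)
  with J_expanding[of y x] have "r * d y x \<le> (1 + \<alpha>) * (defect x + defect y)"
    by (rule order_trans)
  ultimately show ?thesis
    using r_pos unfolding dsym_def by (simp add: pos_le_divide_eq mult.commute)
qed

lemma ds_Cauchy_if_defect_null:
  assumes "(\<lambda>n. defect (xs n)) \<longlonglongrightarrow> 0"
  shows "ds_Cauchy d xs"
proof (rule ds_CauchyI_null)
  show "dsym d (xs m) (xs n) \<le> (1 + \<alpha>) * defect (xs m) / r + (1 + \<alpha>) * defect (xs n) / r"
    for m n
    unfolding add_divide_distrib[symmetric] distrib_left[symmetric] by (rule dsym_le_defects)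
  show "(\<lambda>n. (1 + \<alpha>) * defect (xs n) / r) \<longlonglongrightarrow> 0"
    using tendsto_divide_zero[OF tendsto_mult_right_zero[OF assms]] .
qed

context
  fixes xs :: "nat \<Rightarrow> 'a" and z :: 'a
  assumes defect_null: "(\<lambda>n. defect (xs n)) \<longlonglongrightarrow> 0"
    and J_converges: "ds_converges d (\<lambda>n. J (xs n)) (J z)"
begin

lemma error_null: "(\<lambda>n. dsym d (J (xs n)) (J z) + (1 + \<alpha>) * defect (xs n)) \<longlonglongrightarrow> 0"
  using tendsto_add[OF J_converges[unfolded ds_converges_def] tendsto_mult_right_zero[OF defect_null]]
  by simp

lemma d_J_limit_F_eq_0:
  assumes y: "y \<in> F z"
  shows "d (J z) y = 0"
proof -
  have "(1 - \<alpha>) * d (J z) y \<le> dsym d (J (xs n)) (J z) + (1 + \<alpha>) * defect (xs n)" for n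
  proof -
    have "d (J z) a \<le> dsym d (J (xs n)) (J z) + defect (xs n)" if "a \<in> F (xs n)" for a
      using d_triangle[where x="J z" and y="J (xs n)" and z=a] d_J_F_le_defect[OF that]
        d_le_dsym_commute[where d=d and x="J (xs n)" and y="J z"]
      by linarith
    then have "d (J z) y \<le> dsym d (J (xs n)) (J z) + defect (xs n) + Haus d (F (xs n)) (F z)"
      by (rule d_le_Haus_right[OF F_bounded F_nonempty _ y])
    moreover have "Haus d (F (xs n)) (F z) \<le> \<alpha> * (defect (xs n) + d (J z) y)"
      using Haus_le_defect_left mult_left_mono[OF add_left_mono[OF dpt_set_le[OF y]] \<alpha>_nonneg]
      by (rule order_trans)
    ultimately show ?thesis
      unfolding distrib_left distrib_right left_diff_distrib mult_1_left by linarith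
  qed
  then have "(1 - \<alpha>) * d (J z) y \<le> 0"
    by (intro LIMSEQ_le_const[OF error_null]) auto
  then show ?thesis
    using \<alpha>_less_1 d_nonneg[of "J z" y] by (simp add: mult_le_0_iff)
qed

lemma d_F_J_limit_eq_0:
  assumes y: "y \<in> F z"
  shows "d y (J z) = 0"
proof -
  have "0 \<le> dpt_set d (J z) (F z)"
    by (rule dpt_set_greatest[OF F_nonempty]) simp
  then have dpt_set_0: "dpt_set d (J z) (F z) = 0"
    using dpt_set_le[OF y, of "J z"] d_J_limit_F_eq_0[OF y] by simp
  have "d y (J z) \<le> dsym d (J (xs n)) (J z) + (1 + \<alpha>) * defect (xs n)" for n
  proof -
    have "d b (J z) \<le> defect (xs n) + dsym d (J (xs n)) (J z)" if "b \<in> F (xs n)" for b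
      using d_triangle[where x=b and y="J (xs n)" and z="J z"] d_F_J_le_defect[OF that]
        d_le_dsym[where d=d and x="J (xs n)" and y="J z"]
      by linarith
    then have "d y (J z) \<le> defect (xs n) + dsym d (J (xs n)) (J z) + Haus d (F z) (F (xs n))"
      by (rule d_le_Haus_left[OF F_bounded F_nonempty _ y])
    moreover have "Haus d (F z) (F (xs n)) \<le> \<alpha> * defect (xs n)"
      using Haus_le_defect_right[of z "xs n"] dpt_set_0 by simp
    ultimately show ?thesis
      unfolding distrib_right mult_1_left by linarith
  qed
  then have "d y (J z) \<le> 0"
    by (intro LIMSEQ_le_const[OF error_null]) auto
  then show ?thesis
    using d_nonneg[of y "J z"] by linarith
qed

lemma F_limit_eq_singleton_J: "F z = {J z}"
proof -
  have "y = J z" if "y \<in> F z" for y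
    using d_J_limit_F_eq_0[OF that] d_F_J_limit_eq_0[OF that] by (simp add: d_le_0_antisym)
  then show ?thesis
    using F_nonempty[of z] by blast
qed

end

lemma exists_F_eq_singleton_J_if_defect_null:
  assumes "(\<lambda>n. defect (xs n)) \<longlonglongrightarrow> 0"
  shows "\<exists>z. F z = {J z}"
proof -
  obtain z where "ds_converges d xs z"
    using ds_Cauchy_converges ds_Cauchy_if_defect_null[OF assms] by blast
  then show ?thesis
    using F_limit_eq_singleton_J[OF assms] ds_continuous_converges[OF J_continuous] by blast
qed

lemma approx_mix_point_property_iff: "approx_mix_point_property d J F \<longleftrightarrow> (\<exists>x. F x = {J x})"
proof -
  have bdd: "bdd_below (range defect)"
    using defect_nonneg by (intro bdd_belowI2)
  have "(INF x. defect x) = 0 \<longleftrightarrow> (\<exists>x. F x = {J x})"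
  proof
    assume "(INF x. defect x) = 0"
    moreover obtain xs where "(\<lambda>n. defect (xs n)) \<longlonglongrightarrow> (INF x. defect x)"
      using exists_seq_tendsto_INF[OF bdd] .
    ultimately show "\<exists>x. F x = {J x}"
      using exists_F_eq_singleton_J_if_defect_null by simp
  next
    assume "\<exists>x. F x = {J x}"
    then have "(INF x. defect x) \<le> 0"
      using bdd defect_eq_0 by (metis cINF_lower UNIV_I)
    then show "(INF x. defect x) = 0"
      using defect_nonneg by (meson antisym cINF_greatest UNIV_not_empty)
  qed
  then show ?thesis
    by (simp add: approx_mix_point_property_iff_INF_mix_defect)
qed

end

theorem mainTheorem6:
  fixes d :: "'a \<Rightarrow> 'a \<Rightarrow> real" and J :: "'a \<Rightarrow> 'a" and F :: "'a \<Rightarrow> 'a set"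
    and r \<alpha> :: real
  assumes "quasi_pseudometric d" and "bicomplete d"
    and "ds_continuous d J"
    and "r > 0" and "\<And>x y. r * d x y \<le> d (J x) (J y)"
    and "\<And>x. F x \<in> CB d"
    and "0 < \<alpha>" and "\<alpha> < 1/2"
    and "\<And>x y. Haus d (F x) (F y) \<le> \<alpha> * (dpt_set d (J x) (F x) + dpt_set d (J y) (F y))"
  shows "(\<exists>!x0. startpoint d J F x0 \<and> endpoint d J F x0) \<longleftrightarrow> approx_mix_point_property d J F"
proof -
  interpret kannan_pair d J F r \<alpha>
    using assms by unfold_locales (auto simp: CB_def)
  have "startpoint d J F x \<and> endpoint d J F x \<longleftrightarrow> F x = {J x}" for x
    unfolding startpoint_def endpoint_def
    using Haus_singleton_eq_0_iff[OF F_nonempty F_bounded] .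
  then have "(\<exists>!x0. startpoint d J F x0 \<and> endpoint d J F x0) \<longleftrightarrow> (\<exists>x. F x = {J x})"
    using F_eq_singleton_J_unique by blast
  also have "\<dots> \<longleftrightarrow> approx_mix_point_property d J F"
    by (rule approx_mix_point_property_iff[symmetric])
  finally show ?thesis .
qed

end
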